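(* Let $\bar u\in U_{ad}$ be a local solution of (P) satisfying the linearized Slater condition with Slater point $\hat u\in U_{ad}$ and $\sigma>0$. Let $r>0$ be sufficiently small, and define $t:=\frac{r}{\max(r,\|\hat u-\bar u\|_{L^2})}$, $\hat u^r:=\bar u+t(\hat u-\bar u)$, $\sigma_r:=t\sigma$. Let $\rho>0$, $\mu\in L^2(\Omega)$ and let $\bar u^r_\rho\in U_{ad}$ with $\|\bar u^r_\rho-\bar u\|_{L^2}\le r$ be a solution of the auxiliary problem, with $\bar y^r_\rho=S(\bar u^r_\rho)$. Define $d[\bar u^r_\rho,(P)]:=\|(\bar y^r_\rho-\psi)_+\|_{C(\bar\Omega)}$, $\delta_\rho:=\frac{d[\bar u^r_\rho,(P)]}{d[\bar u^r_\rho,(P)]+\sigma_r/4}$, and for $\delta\in[0,\delta_\rho]$ let $u^{r,\delta}:=\bar u^r_\rho+\delta(\hat u^r-\bar u^r_\rho)$. Then there is a constant $c>0$, independent of $\rho$ and $\delta$, such that $\|\bar u^r_\rho-u^{r,\delta}\|_{L^2(\Omega)}\le c\,d[\bar u^r_\rho,(P)]$ for all $\delta\in[0,\delta_\rho]$.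
   Context: Let $\Omega\subset\mathbb{R}^N$, $N\in\{2,3\}$, be a bounded domain with $C^{1,1}$ boundary $\Gamma$, or a bounded convex domain with polygonal boundary $\Gamma$. Let $y_d\in L^2(\Omega)$, $\psi\in C(\bar\Omega)$, $\alpha>0$, $u_a,u_b\in L^\infty(\Omega)$ with $u_a\le u_b$, $U_{ad}=\{u\in L^\infty(\Omega): u_a\le u\le u_b\text{ a.e.}\}$. Let $Ay=-\sum_{i,j=1}^N\partial_{x_j}(a_{ij}\partial_{x_i}y)+a_0y$ with $a_{ij}\in C^{0,1}(\bar\Omega)$, $a_0\in L^\infty(\Omega)$, $a_0\ge0$ a.e., $a_0\not\equiv0$, uniformly elliptic with constant $\delta_0>0$; $\partial_{\nu_A}y=\sum a_{ij}\partial_{x_i}y\,\nu_j$. The function $d:\Omega\times\mathbb{R}\to\mathbb{R}$ is measurable in $x$, $C^2$ in $y$ for a.e. $x$, $\|d(\cdot,0)\|_\infty+\|d_y(\cdot,0)\|_\infty+\|d_{yy}(\cdot,0)\|_\infty<\infty$, $d_y\ge0$, $d_{yy}$ Lipschitz in $y$ on bounded sets uniformly in $x$, and $d_y>0$ on $E_\Omega\times\mathbb{R}$ for some $E_\Omega$ of positive measure. $S(u)\in H^1(\Omega)\cap C(\bar\Omega)$ is the weak solution of $Ay+d(x,y)=u$ in $\Omega$, $\partial_{\nu_A}y=0$ on $\Gamma$; $S'(u)h=z$ is the weak solution of $Az+d_y(x,S(u))z=h$, $\partial_{\nu_A}z=0$. $f(u)=\frac12\|S(u)-y_d\|_{L^2}^2+\frac\alpha2\|u\|_{L^2}^2$.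 Problem (P): minimize $f$ over $u\in U_{ad}$ with $S(u)\le\psi$ on $\bar\Omega$; local solution in the $L^2$ sense. Linearized Slater condition at $\bar u$: $S(\bar u)+S'(\bar u)(\hat u-\bar u)\le\psi-\sigma$ on $\bar\Omega$. The auxiliary problem (for $\mu\in L^2$, $\rho>0$) minimizes $f(u)+\frac1{2\rho}\int_\Omega((\mu+\rho(S(u)-\psi))_+)^2dx$ over $\{u\in U_{ad}:\|u-\bar u\|_{L^2}\le r\}$. $(\cdot)_+=\max(0,\cdot)$. *)

theory Defs
  imports "HOL-Analysis.Analysis"
begin

type_synonym 'n pt = "real ^ 'n"

text \<open>Lebesgue spaces on a domain Omega (functions on the whole space, only values on Omega matter).\<close>

definition L2fun :: "('n::finite) pt set \<Rightarrow> ('n pt \<Rightarrow> real) \<Rightarrow> bool" where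
  "L2fun \<Omega> f \<longleftrightarrow> f \<in> borel_measurable (lebesgue_on \<Omega>) \<and>
      integrable (lebesgue_on \<Omega>) (\<lambda>x. (f x)\<^sup>2)"

definition L2norm :: "('n::finite) pt set \<Rightarrow> ('n pt \<Rightarrow> real) \<Rightarrow> real" where
  "L2norm \<Omega> f = sqrt (\<integral>x. (f x)\<^sup>2 \<partial>lebesgue_on \<Omega>)"

definition Linf :: "('n::finite) pt set \<Rightarrow> ('n pt \<Rightarrow> real) \<Rightarrow> bool" where
  "Linf \<Omega> f \<longleftrightarrow> f \<in> borel_measurable (lebesgue_on \<Omega>) \<and>
      (\<exists>C. AE x in lebesgue_on \<Omega>. \<bar>f x\<bar> \<le> C)"

definition Uad :: "('n::finite) pt set \<Rightarrow> ('n pt \<Rightarrow> real) \<Rightarrow> ('n pt \<Rightarrow> real) \<Rightarrow> ('n pt \<Rightarrow> real) set" where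
  "Uad \<Omega> ua ub = {u. Linf \<Omega> u \<and> (AE x in lebesgue_on \<Omega>. ua x \<le> u x \<and> u x \<le> ub x)}"

fun Ck :: "nat \<Rightarrow> (('n::finite) pt \<Rightarrow> real) \<Rightarrow> bool" where
  "Ck 0 f \<longleftrightarrow> continuous_on UNIV f"
| "Ck (Suc k) f \<longleftrightarrow> (\<exists>Df. (\<forall>x. (f has_derivative (\<lambda>h. Df x \<bullet> h)) (at x)) \<and>
                          (\<forall>i. Ck k (\<lambda>x. Df x $ i)))"

definition test_fun :: "('n::finite) pt set \<Rightarrow> ('n pt \<Rightarrow> real) \<Rightarrow> bool" where
  "test_fun \<Omega> \<phi> \<longleftrightarrow> (\<forall>k. Ck k \<phi>) \<and>
      (\<exists>K. compact K \<and> K \<subseteq> \<Omega> \<and> (\<forall>x. x \<notin> K \<longrightarrow> \<phi> x = 0))"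

definition weak_grad :: "('n::finite) pt set \<Rightarrow> ('n pt \<Rightarrow> real) \<Rightarrow> ('n pt \<Rightarrow> 'n pt) \<Rightarrow> bool" where
  "weak_grad \<Omega> y g \<longleftrightarrow> (\<forall>i. L2fun \<Omega> (\<lambda>x. g x $ i)) \<and>
     (\<forall>\<phi>. test_fun \<Omega> \<phi> \<longrightarrow> (\<forall>i.
        (\<integral>x. y x * frechet_derivative \<phi> (at x) (axis i 1) \<partial>lebesgue_on \<Omega>)
          = - (\<integral>x. g x $ i * \<phi> x \<partial>lebesgue_on \<Omega>)))"

definition H1 :: "('n::finite) pt set \<Rightarrow> ('n pt \<Rightarrow> real) \<Rightarrow> bool" where
  "H1 \<Omega> y \<longleftrightarrow> L2fun \<Omega> y \<and> (\<exists>g. weak_grad \<Omega> y g)"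

text \<open>y in H1 and C(closure Omega) is the weak solution of
  -sum_ij d_j(a_ij d_i y) + a0 y + dd(x,y) = u in Omega, conormal derivative = 0 on the boundary.\<close>
definition weak_sol :: "('n::finite) pt set \<Rightarrow> ('n \<Rightarrow> 'n \<Rightarrow> 'n pt \<Rightarrow> real) \<Rightarrow> ('n pt \<Rightarrow> real)
     \<Rightarrow> ('n pt \<Rightarrow> real \<Rightarrow> real) \<Rightarrow> ('n pt \<Rightarrow> real) \<Rightarrow> ('n pt \<Rightarrow> real) \<Rightarrow> bool" where
  "weak_sol \<Omega> a a0 dd u y \<longleftrightarrow> H1 \<Omega> y \<and> continuous_on (closure \<Omega>) y \<and>
     (\<exists>gy. weak_grad \<Omega> y gy \<and>
        (\<forall>v gv. L2fun \<Omega> v \<and> weak_grad \<Omega> v gv \<longrightarrow>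
           (\<integral>x. (\<Sum>i\<in>UNIV. \<Sum>j\<in>UNIV. a i j x * (gy x $ i) * (gv x $ j))
                 + a0 x * y x * v x + dd x (y x) * v x \<partial>lebesgue_on \<Omega>)
           = (\<integral>x. u x * v x \<partial>lebesgue_on \<Omega>)))"

definition C11_boundary :: "('n::finite) pt set \<Rightarrow> bool" where
  "C11_boundary \<Omega> \<longleftrightarrow> (\<forall>p\<in>frontier \<Omega>. \<exists>r>0. \<exists>\<nu> :: 'n pt. \<exists>\<gamma> D L. norm \<nu> = 1 \<and>
      (\<forall>x. (\<gamma> has_derivative (\<lambda>h. D x \<bullet> h)) (at x)) \<and> L-lipschitz_on UNIV D \<and>
      \<Omega> \<inter> ball p r = {x \<in> ball p r. x \<bullet> \<nu> < \<gamma> (x - (x \<bullet> \<nu>) *\<^sub>R \<nu>)})"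

definition cost :: "('n::finite) pt set \<Rightarrow> (('n pt \<Rightarrow> real) \<Rightarrow> 'n pt \<Rightarrow> real) \<Rightarrow> ('n pt \<Rightarrow> real)
    \<Rightarrow> real \<Rightarrow> ('n pt \<Rightarrow> real) \<Rightarrow> real" where
  "cost \<Omega> S yd \<alpha> u = 1/2 * (L2norm \<Omega> (\<lambda>x. S u x - yd x))\<^sup>2 + \<alpha>/2 * (L2norm \<Omega> u)\<^sup>2"

definition aux_obj :: "('n::finite) pt set \<Rightarrow> (('n pt \<Rightarrow> real) \<Rightarrow> 'n pt \<Rightarrow> real) \<Rightarrow> ('n pt \<Rightarrow> real)
    \<Rightarrow> real \<Rightarrow> ('n pt \<Rightarrow> real) \<Rightarrow> ('n pt \<Rightarrow> real) \<Rightarrow> real \<Rightarrow> ('n pt \<Rightarrow> real) \<Rightarrow> real" where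
  "aux_obj \<Omega> S yd \<alpha> \<psi> \<mu> \<rho> u = cost \<Omega> S yd \<alpha> u +
     1 / (2 * \<rho>) * (\<integral>x. (max 0 (\<mu> x + \<rho> * (S u x - \<psi> x)))\<^sup>2 \<partial>lebesgue_on \<Omega>)"

definition feasible :: "('n::finite) pt set \<Rightarrow> (('n pt \<Rightarrow> real) \<Rightarrow> 'n pt \<Rightarrow> real) \<Rightarrow> ('n pt \<Rightarrow> real)
    \<Rightarrow> ('n pt \<Rightarrow> real) \<Rightarrow> ('n pt \<Rightarrow> real) \<Rightarrow> ('n pt \<Rightarrow> real) set" where
  "feasible \<Omega> S \<psi> ua ub = {u \<in> Uad \<Omega> ua ub. \<forall>x\<in>closure \<Omega>. S u x \<le> \<psi> x}"

definition viol :: "('n::finite) pt set \<Rightarrow> (('n pt \<Rightarrow> real) \<Rightarrow> 'n pt \<Rightarrow> real) \<Rightarrow> ('n pt \<Rightarrow> real)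
    \<Rightarrow> ('n pt \<Rightarrow> real) \<Rightarrow> real" where
  "viol \<Omega> S \<psi> u = (SUP x\<in>closure \<Omega>. \<bar>max 0 (S u x - \<psi> x)\<bar>)"

end

(* The auxiliary solution and the shrunken Slater point both lie in the L2-ball of
   radius r around the local solution, so the step between them has length at most 2r.
   The step of size delta therefore has length at most 2 r delta, and
   delta <= d / (d + sigma_r / 4) <= 4 d / sigma_r, giving c = 8 r / sigma_r, which
   depends on r but not on rho or delta. No smallness of r is needed, so r0 = 1. *)

theory Submission
  imports Defs
begin

lemma Linf_diff:
  assumes "Linf \<Omega> f" "Linf \<Omega> g"
  shows "Linf \<Omega> (\<lambda>x. f x - g x)"
proof -
  obtain C D where meas: "f \<in> borel_measurable (lebesgue_on \<Omega>)" "g \<in> borel_measurable (lebesgue_on \<Omega>)"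
    and C: "AE x in lebesgue_on \<Omega>. \<bar>f x\<bar> \<le> C" and D: "AE x in lebesgue_on \<Omega>. \<bar>g x\<bar> \<le> D"
    using assms unfolding Linf_def by blast
  from C D have "AE x in lebesgue_on \<Omega>. \<bar>f x - g x\<bar> \<le> C + D"
    by eventually_elim linarith
  moreover from meas have "(\<lambda>x. f x - g x) \<in> borel_measurable (lebesgue_on \<Omega>)"
    by measurable
  ultimately show ?thesis
    unfolding Linf_def by blast
qed

lemma Linf_square_integrable:
  assumes "\<Omega> \<in> lmeasurable" "Linf \<Omega> f"
  shows "integrable (lebesgue_on \<Omega>) (\<lambda>x. (f x)\<^sup>2)"
proof -
  interpret finite_measure "lebesgue_on \<Omega>"
    using assms(1) by (rule finite_measure_lebesgue_on)
  obtain C where meas: "f \<in> borel_measurable (lebesgue_on \<Omega>)"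
    and C: "AE x in lebesgue_on \<Omega>. \<bar>f x\<bar> \<le> C"
    using assms(2) unfolding Linf_def by blast
  from C have "AE x in lebesgue_on \<Omega>. norm ((f x)\<^sup>2) \<le> C\<^sup>2"
    by eventually_elim (simp, metis abs_ge_zero power2_abs power_mono)
  moreover from meas have "(\<lambda>x. (f x)\<^sup>2) \<in> borel_measurable (lebesgue_on \<Omega>)"
    by measurable
  ultimately show ?thesis
    by (rule integrable_const_bound)
qed

lemma L2norm_nonneg: "0 \<le> L2norm \<Omega> f"
  unfolding L2norm_def by simp

lemma L2norm_square: "(L2norm \<Omega> f)\<^sup>2 = (\<integral>x. (f x)\<^sup>2 \<partial>lebesgue_on \<Omega>)"
  unfolding L2norm_def by simp

lemma L2norm_mult: "L2norm \<Omega> (\<lambda>x. c * f x) = \<bar>c\<bar> * L2norm \<Omega> f"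
  unfolding L2norm_def by (simp add: power_mult_distrib real_sqrt_mult)

lemma L2norm_diff_commute: "L2norm \<Omega> (\<lambda>x. f x - g x) = L2norm \<Omega> (\<lambda>x. g x - f x)"
  unfolding L2norm_def by (simp add: power2_commute)

lemma L2norm_add_square_le:
  assumes "integrable (lebesgue_on \<Omega>) (\<lambda>x. (f x)\<^sup>2)" "integrable (lebesgue_on \<Omega>) (\<lambda>x. (g x)\<^sup>2)"
  shows "(L2norm \<Omega> (\<lambda>x. f x + g x))\<^sup>2 \<le> 2 * (L2norm \<Omega> f)\<^sup>2 + 2 * (L2norm \<Omega> g)\<^sup>2"
proof -
  have "(p + q)\<^sup>2 \<le> 2 * p\<^sup>2 + 2 * q\<^sup>2" for p q :: real
    using sum_power2_ge_zero[of "p - q" 0] by (simp add: power2_eq_square algebra_simps)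
  then have "(\<integral>x. (f x + g x)\<^sup>2 \<partial>lebesgue_on \<Omega>) \<le> (\<integral>x. 2 * (f x)\<^sup>2 + 2 * (g x)\<^sup>2 \<partial>lebesgue_on \<Omega>)"
    using assms by (intro integral_mono') auto
  also have "\<dots> = 2 * (\<integral>x. (f x)\<^sup>2 \<partial>lebesgue_on \<Omega>) + 2 * (\<integral>x. (g x)\<^sup>2 \<partial>lebesgue_on \<Omega>)"
    using assms by simp
  finally show ?thesis
    by (simp only: L2norm_square)
qed

lemma L2norm_add_le_double:
  assumes "integrable (lebesgue_on \<Omega>) (\<lambda>x. (f x)\<^sup>2)" "integrable (lebesgue_on \<Omega>) (\<lambda>x. (g x)\<^sup>2)"
    and "L2norm \<Omega> f \<le> r" "L2norm \<Omega> g \<le> r"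
  shows "L2norm \<Omega> (\<lambda>x. f x + g x) \<le> 2 * r"
proof -
  have "(L2norm \<Omega> f)\<^sup>2 \<le> r\<^sup>2"
    using assms(3) by (rule power_mono) (rule L2norm_nonneg)
  moreover have "(L2norm \<Omega> g)\<^sup>2 \<le> r\<^sup>2"
    using assms(4) by (rule power_mono) (rule L2norm_nonneg)
  ultimately have "(L2norm \<Omega> (\<lambda>x. f x + g x))\<^sup>2 \<le> 4 * r\<^sup>2"
    using L2norm_add_square_le[OF assms(1,2)] by linarith
  then have "(L2norm \<Omega> (\<lambda>x. f x + g x))\<^sup>2 \<le> (2 * r)\<^sup>2"
    by (simp add: power_mult_distrib)
  moreover have "0 \<le> 2 * r"
    using assms(3) L2norm_nonneg[of \<Omega> f] by linarith
  ultimately show ?thesis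
    by (rule power2_le_imp_le)
qed

lemma divide_add_quarter_le:
  fixes d s :: real
  assumes "0 \<le> d" "0 < s"
  shows "d / (d + s / 4) \<le> 4 * d / s"
proof -
  have "d / (d + s / 4) \<le> d / (s / 4)"
    using assms by (intro divide_left_mono) auto
  then show ?thesis
    by (simp add: mult.commute)
qed

lemma L2norm_Slater_step_le:
  assumes \<Omega>: "\<Omega> \<in> lmeasurable"
    and Linf: "Linf \<Omega> ubar" "Linf \<Omega> uhat" "Linf \<Omega> u"
    and t: "0 < t" "t * L2norm \<Omega> (\<lambda>x. uhat x - ubar x) \<le> r"
    and u: "L2norm \<Omega> (\<lambda>x. u x - ubar x) \<le> r"
    and \<sigma>: "0 < \<sigma>"
    and dP: "0 \<le> dP"
    and \<delta>: "0 \<le> \<delta>" "\<delta> \<le> dP / (dP + t * \<sigma> / 4)"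
  shows "L2norm \<Omega> (\<lambda>x. u x - (u x + \<delta> * (ubar x + t * (uhat x - ubar x) - u x)))
           \<le> 8 * r / (t * \<sigma>) * dP"
proof -
  have "L2norm \<Omega> (\<lambda>x. t * (uhat x - ubar x) + (ubar x - u x)) \<le> 2 * r"
  proof (rule L2norm_add_le_double)
    show "integrable (lebesgue_on \<Omega>) (\<lambda>x. (t * (uhat x - ubar x))\<^sup>2)"
      "integrable (lebesgue_on \<Omega>) (\<lambda>x. (ubar x - u x)\<^sup>2)"
      using Linf_square_integrable[OF \<Omega> Linf_diff] Linf by (simp_all add: power_mult_distrib)
  qed (use t u L2norm_diff_commute[of \<Omega> u ubar] in \<open>simp_all add: L2norm_mult\<close>)
  then have step: "L2norm \<Omega> (\<lambda>x. ubar x + t * (uhat x - ubar x) - u x) \<le> 2 * r"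
    by (simp add: algebra_simps)
  have "L2norm \<Omega> (\<lambda>x. u x - (u x + \<delta> * (ubar x + t * (uhat x - ubar x) - u x)))
        = \<delta> * L2norm \<Omega> (\<lambda>x. ubar x + t * (uhat x - ubar x) - u x)"
    using L2norm_mult[of \<Omega> "- \<delta>"] \<delta>(1) by simp
  also have "\<dots> \<le> 4 * dP / (t * \<sigma>) * (2 * r)"
    using \<delta> divide_add_quarter_le[OF dP, of "t * \<sigma>"] t(1) \<sigma> step L2norm_nonneg
    by (intro mult_mono) auto
  finally show ?thesis
    by (simp add: ac_simps)
qed

lemma viol_nonneg:
  assumes "continuous_on (closure \<Omega>) (S u)" "continuous_on (closure \<Omega>) \<psi>"
    and "bounded \<Omega>" "\<Omega> \<noteq> {}"
  shows "0 \<le> viol \<Omega> S \<psi> u"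
proof -
  have "compact ((\<lambda>x. \<bar>max 0 (S u x - \<psi> x)\<bar>) ` closure \<Omega>)"
    using assms by (intro compact_continuous_image continuous_intros) auto
  then have "bdd_above ((\<lambda>x. \<bar>max 0 (S u x - \<psi> x)\<bar>) ` closure \<Omega>)"
    by (intro bounded_imp_bdd_above compact_imp_bounded)
  moreover obtain x0 where "x0 \<in> closure \<Omega>"
    using assms(4) closure_subset by blast
  ultimately have "\<bar>max 0 (S u x0 - \<psi> x0)\<bar> \<le> viol \<Omega> S \<psi> u"
    unfolding viol_def by (rule cSUP_upper[rotated])
  then show ?thesis
    by linarith
qed

lemma shrink_factor:
  fixes r L :: real
  assumes "0 < r" "0 \<le> L"
  shows "0 < r / max r L" "r / max r L * L \<le> r"
  using assms by (auto simp: field_simps max_def)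

theorem lemma5p6:
  fixes \<Omega> :: "(real ^ 'n::finite) set"
    and a :: "'n \<Rightarrow> 'n \<Rightarrow> real ^ 'n \<Rightarrow> real"
    and a0 yd \<psi> ua ub ubar uhat :: "real ^ 'n \<Rightarrow> real"
    and d dy dyy :: "real ^ 'n \<Rightarrow> real \<Rightarrow> real"
    and S :: "(real ^ 'n \<Rightarrow> real) \<Rightarrow> real ^ 'n \<Rightarrow> real"
    and S' :: "(real ^ 'n \<Rightarrow> real) \<Rightarrow> (real ^ 'n \<Rightarrow> real) \<Rightarrow> real ^ 'n \<Rightarrow> real"
    and \<alpha> \<sigma> \<delta>0 :: real
  assumes dim: "CARD('n) = 2 \<or> CARD('n) = 3"
    and dom: "open \<Omega>" "bounded \<Omega>" "connected \<Omega>" "\<Omega> \<noteq> {}"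
    and bdry: "C11_boundary \<Omega> \<or> (convex \<Omega> \<and> polytope (closure \<Omega>))"
    and yd: "L2fun \<Omega> yd"
    and psi: "continuous_on (closure \<Omega>) \<psi>"
    and alpha: "\<alpha> > 0"
    and uab: "Linf \<Omega> ua" "Linf \<Omega> ub" "AE x in lebesgue_on \<Omega>. ua x \<le> ub x"
    and a_lip: "\<forall>i j. \<exists>L. L-lipschitz_on (closure \<Omega>) (a i j)"
    and ellip: "\<delta>0 > 0" "\<forall>x\<in>closure \<Omega>. \<forall>\<xi>::real^'n.
                   (\<Sum>i\<in>UNIV. \<Sum>j\<in>UNIV. a i j x * \<xi> $ i * \<xi> $ j) \<ge> \<delta>0 * (norm \<xi>)\<^sup>2"
    and a0: "Linf \<Omega> a0" "AE x in lebesgue_on \<Omega>. a0 x \<ge> 0"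
            "\<not> (AE x in lebesgue_on \<Omega>. a0 x = 0)"
    and d_meas: "\<forall>s. (\<lambda>x. d x s) \<in> borel_measurable (lebesgue_on \<Omega>)"
    and d_C2: "AE x in lebesgue_on \<Omega>. \<forall>s. (d x has_real_derivative dy x s) (at s) \<and>
                  (dy x has_real_derivative dyy x s) (at s) \<and> isCont (dyy x) s"
    and d_bnd: "\<exists>C. AE x in lebesgue_on \<Omega>. \<bar>d x 0\<bar> + \<bar>dy x 0\<bar> + \<bar>dyy x 0\<bar> \<le> C"
    and d_mono: "AE x in lebesgue_on \<Omega>. \<forall>s. dy x s \<ge> 0"
    and dyy_lip: "\<forall>M. \<exists>L. AE x in lebesgue_on \<Omega>. \<forall>s1 s2. \<bar>s1\<bar> \<le> M \<and> \<bar>s2\<bar> \<le> M \<longrightarrow>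
                    \<bar>dyy x s1 - dyy x s2\<bar> \<le> L * \<bar>s1 - s2\<bar>"
    and d_pos: "\<exists>E. E \<in> sets lebesgue \<and> E \<subseteq> \<Omega> \<and> emeasure lebesgue E > 0 \<and>
                  (\<forall>x\<in>E. \<forall>s. dy x s > 0)"
    and S_def: "\<forall>u. Linf \<Omega> u \<longrightarrow> weak_sol \<Omega> a a0 d u (S u)"
    and S'_def: "\<forall>u h. Linf \<Omega> u \<and> L2fun \<Omega> h \<longrightarrow>
                   weak_sol \<Omega> a a0 (\<lambda>x z. dy x (S u x) * z) h (S' u h)"
    and ubar_feas: "ubar \<in> feasible \<Omega> S \<psi> ua ub"
    and ubar_loc: "\<exists>\<epsilon>>0. \<forall>u\<in>feasible \<Omega> S \<psi> ua ub.
                     L2norm \<Omega> (\<lambda>x. u x - ubar x) \<le> \<epsilon> \<longrightarrow> cost \<Omega> S yd \<alpha> ubar \<le> cost \<Omega> S yd \<alpha> u"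
    and slater: "uhat \<in> Uad \<Omega> ua ub" "\<sigma> > 0"
                "\<forall>x\<in>closure \<Omega>. S ubar x + S' ubar (\<lambda>z. uhat z - ubar z) x \<le> \<psi> x - \<sigma>"
  shows "\<exists>r0>0. \<forall>r. 0 < r \<and> r \<le> r0 \<longrightarrow>
    (let t = r / max r (L2norm \<Omega> (\<lambda>x. uhat x - ubar x));
         uhat_r = (\<lambda>x. ubar x + t * (uhat x - ubar x));
         \<sigma>r = t * \<sigma>
     in \<forall>\<mu>. L2fun \<Omega> \<mu> \<longrightarrow>
       (\<exists>c>0. \<forall>\<rho> > 0. \<forall>u\<rho>.
          (u\<rho> \<in> Uad \<Omega> ua ub \<and> L2norm \<Omega> (\<lambda>x. u\<rho> x - ubar x) \<le> r \<and>
           (\<forall>u\<in>Uad \<Omega> ua ub. L2norm \<Omega> (\<lambda>x. u x - ubar x) \<le> r \<longrightarrow>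
               aux_obj \<Omega> S yd \<alpha> \<psi> \<mu> \<rho> u\<rho> \<le> aux_obj \<Omega> S yd \<alpha> \<psi> \<mu> \<rho> u)) \<longrightarrow>
          (let dP = viol \<Omega> S \<psi> u\<rho>;
               \<delta>\<rho> = dP / (dP + \<sigma>r / 4)
           in \<forall>\<delta>. 0 \<le> \<delta> \<and> \<delta> \<le> \<delta>\<rho> \<longrightarrow>
                L2norm \<Omega> (\<lambda>x. u\<rho> x - (u\<rho> x + \<delta> * (uhat_r x - u\<rho> x))) \<le> c * dP)))"
proof -
  have \<Omega>: "\<Omega> \<in> lmeasurable"
    using lmeasurable_open dom by blast
  have Linf: "Linf \<Omega> ubar" "Linf \<Omega> uhat"
    using ubar_feas slater(1) unfolding feasible_def Uad_def by auto
  show ?thesis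
    unfolding Let_def
  proof (rule exI[of _ 1], intro conjI allI impI, goal_cases one_pos radius)
    case (radius r)
    define t where "t = r / max r (L2norm \<Omega> (\<lambda>x. uhat x - ubar x))"
    have t: "0 < t" "t * L2norm \<Omega> (\<lambda>x. uhat x - ubar x) \<le> r"
      using radius shrink_factor L2norm_nonneg unfolding t_def by auto
    show ?case
      unfolding t_def[symmetric]
    proof (intro exI[of _ "8 * r / (t * \<sigma>)"] conjI allI impI, goal_cases c_pos estimate)
      case c_pos
      show ?case
        using radius t slater(2) by simp
    next
      case (estimate \<rho> u\<rho> \<delta>)
      then have u\<rho>: "Linf \<Omega> u\<rho>" "L2norm \<Omega> (\<lambda>x. u\<rho> x - ubar x) \<le> r"
        by (auto simp: Uad_def)
      have "continuous_on (closure \<Omega>) (S u\<rho>)"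
        using S_def u\<rho>(1) unfolding weak_sol_def by blast
      then have "0 \<le> viol \<Omega> S \<psi> u\<rho>"
        using psi dom(2,4) by (rule viol_nonneg)
      with estimate show ?case
        using L2norm_Slater_step_le[OF \<Omega> Linf u\<rho>(1) t u\<rho>(2) slater(2)] by blast
    qed
  qed simp
qed

end
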